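(* Let $G$ be a finite simple graph and let $L=x_1x_2\dots x_n$ be an enumeration of its vertices such that $G$ has no two secant edges with respect to $L$. Then $G$ is $3$-colorable, i.e. $\chi(G)\le 3$.
   Context: For an enumeration $L=x_1x_2\dots x_n$ of the vertices of $G$, an edge $x_ix_j$ is a jump with respect to $L$ if $|i-j|>1$. Two jumps $x_lx_m$ and $x_px_q$ with $l<m$ and $p<q$ are secant with respect to $L$ if $l<p<m<q$ or $p<l<q<m$. *)

theory Defs
  imports Main
begin

definition simple_graph :: "'a set \<Rightarrow> ('a \<Rightarrow> 'a \<Rightarrow> bool) \<Rightarrow> bool" where
  "simple_graph V E \<longleftrightarrow> finite V \<and> (\<forall>x y. E x y \<longrightarrow> x \<in> V \<and> y \<in> V)
     \<and> (\<forall>x y. E x y \<longrightarrow> E y x) \<and> (\<forall>x. \<not> E x x)"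

text \<open>An enumeration of the vertices: a list x_1 ... x_n listing each vertex exactly once
(positions are 0-based list indices).\<close>
definition enumeration :: "'a set \<Rightarrow> 'a list \<Rightarrow> bool" where
  "enumeration V L \<longleftrightarrow> distinct L \<and> set L = V"

definition jump :: "('a \<Rightarrow> 'a \<Rightarrow> bool) \<Rightarrow> 'a list \<Rightarrow> nat \<Rightarrow> nat \<Rightarrow> bool" where
  "jump E L i j \<longleftrightarrow> i < length L \<and> j < length L \<and> E (L!i) (L!j)
      \<and> (i + 1 < j \<or> j + 1 < i)"

definition secant :: "('a \<Rightarrow> 'a \<Rightarrow> bool) \<Rightarrow> 'a list \<Rightarrow> nat \<Rightarrow> nat \<Rightarrow> nat \<Rightarrow> nat \<Rightarrow> bool" where
  "secant E L l m p q \<longleftrightarrow> jump E L l m \<and> jump E L p q \<and> l < m \<and> p < q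
      \<and> ((l < p \<and> p < m \<and> m < q) \<or> (p < l \<and> l < q \<and> q < m))"

definition no_secant_edges :: "('a \<Rightarrow> 'a \<Rightarrow> bool) \<Rightarrow> 'a list \<Rightarrow> bool" where
  "no_secant_edges E L \<longleftrightarrow> (\<forall>l m p q. \<not> secant E L l m p q)"

definition colorable :: "'a set \<Rightarrow> ('a \<Rightarrow> 'a \<Rightarrow> bool) \<Rightarrow> nat \<Rightarrow> bool" where
  "colorable V E k \<longleftrightarrow> (\<exists>c :: 'a \<Rightarrow> nat. (\<forall>v\<in>V. c v < k)
      \<and> (\<forall>x y. E x y \<longrightarrow> c x \<noteq> c y))"

end

theory Submission
  imports Defs
begin

(* Identify each vertex with its position in L. Having no secant edges says that the edge
   relation on positions has no crossing pair a < c < b < d with edges ab and cd. Such a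
   graph has a vertex of degree at most 2: if some edge lm spans a vertex, take a shortest
   one and let v be the first vertex after l; every neighbour of v other than l lies in
   (v, m] (otherwise two edges cross) with no vertex strictly between (otherwise there is a
   shorter spanning edge), so it is the next vertex after v. If no edge spans a vertex, the
   first vertex works. As the property passes to induced subgraphs, the graph is
   2-degenerate and hence greedily 3-colourable. *)

lemma colorable_if_degenerate:
  assumes graph: "simple_graph S R"
    and low_degree: "\<And>T. T \<subseteq> S \<Longrightarrow> T \<noteq> {} \<Longrightarrow> \<exists>v\<in>T. card {w\<in>T. R v w} < k"
  shows "colorable S R k"
proof -
  have fin: "finite S" and sym: "\<And>x y. R x y \<Longrightarrow> R y x" and irrefl: "\<And>x. \<not> R x x"
    and edges: "\<And>x y. R x y \<Longrightarrow> x \<in> S \<and> y \<in> S"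
    using graph unfolding simple_graph_def by blast+
  have "colorable S (\<lambda>x y. R x y \<and> x \<in> S \<and> y \<in> S) k"
    using fin
  proof (induction rule: finite_remove_induct)
    case empty
    show ?case unfolding colorable_def by auto
  next
    case (remove A)
    obtain v where v: "v \<in> A" and deg: "card {w\<in>A. R v w} < k"
      using low_degree remove.hyps by blast
    obtain c where c_range: "\<forall>x\<in>A - {v}. c x < k"
      and c_proper: "\<forall>x y. R x y \<and> x \<in> A - {v} \<and> y \<in> A - {v} \<longrightarrow> c x \<noteq> c y"
      using remove.IH[OF v] unfolding colorable_def by blast
    define N where "N = {w\<in>A. R v w}"
    have "finite N" using remove.hyps(1) unfolding N_def by simp
    then have "card (c ` N) < card {0..<k}"
      using card_image_le[of N c] deg unfolding N_def by simp
    then have "\<not> {0..<k} \<subseteq> c ` N"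
      using card_mono[OF finite_imageI[OF \<open>finite N\<close>]] by fastforce
    then obtain a where "a \<in> {0..<k}" "a \<notin> c ` N" by blast
    then have a: "a < k" and nbr: "\<And>w. w \<in> A \<Longrightarrow> R v w \<Longrightarrow> c w \<noteq> a"
      unfolding N_def by auto
    have "\<forall>x\<in>A. (c(v := a)) x < k" using c_range a by auto
    moreover have "(c(v := a)) x \<noteq> (c(v := a)) y" if "R x y" "x \<in> A" "y \<in> A" for x y
    proof (cases "x = v \<or> y = v")
      case True
      then show ?thesis using that nbr[of x] nbr[of y] sym[OF \<open>R x y\<close>] irrefl[of v] by auto
    next
      case False
      then show ?thesis using that c_proper by auto
    qed
    ultimately show ?case unfolding colorable_def by blast
  qed
  moreover have "(\<lambda>x y. R x y \<and> x \<in> S \<and> y \<in> S) = R" using edges by blast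
  ultimately show ?thesis by auto
qed

lemma Min_above_eqI:
  fixes v :: "'a :: linorder"
  assumes "finite T" "w \<in> T" "v < w" "\<forall>x\<in>T. v < x \<longrightarrow> \<not> x < w"
  shows "Min {x\<in>T. v < x} = w"
  using assms by (intro Min_eqI) auto

definition non_crossing :: "(nat \<Rightarrow> nat \<Rightarrow> bool) \<Rightarrow> bool" where
  "non_crossing R \<longleftrightarrow> \<not> (\<exists>a b c d. R a b \<and> R c d \<and> a < c \<and> c < b \<and> b < d)"

lemma non_crossingD:
  "non_crossing R \<Longrightarrow> R a b \<Longrightarrow> R c d \<Longrightarrow> a < c \<Longrightarrow> c < b \<Longrightarrow> b < d \<Longrightarrow> False"
  unfolding non_crossing_def by blast

definition spanning_edge :: "nat set \<Rightarrow> (nat \<Rightarrow> nat \<Rightarrow> bool) \<Rightarrow> nat \<Rightarrow> nat \<Rightarrow> bool" where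
  "spanning_edge T R a b \<longleftrightarrow> R a b \<and> a \<in> T \<and> b \<in> T \<and> a < b \<and> (\<exists>x\<in>T. a < x \<and> x < b)"

lemma neighbour_of_Min_eq_next_if_no_spanning_edge:
  assumes "finite T" "irreflp R" "\<nexists>a b. spanning_edge T R a b"
    and "w \<in> T" "R (Min T) w"
  shows "w = Min {x\<in>T. Min T < x}"
proof -
  have "Min T \<in> T" using Min_in[OF assms(1)] assms(4) by blast
  have "Min T \<le> w" using Min_le[OF assms(1,4)] .
  moreover have "Min T \<noteq> w" using irreflpD[OF assms(2)] assms(5) by blast
  ultimately have "Min T < w" by simp
  moreover have "\<forall>x\<in>T. Min T < x \<longrightarrow> \<not> x < w"
    using assms(3-5) \<open>Min T \<in> T\<close> \<open>Min T < w\<close> unfolding spanning_edge_def by blast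
  ultimately show ?thesis using Min_above_eqI assms(1,4) by metis
qed

lemma neighbour_eq_next_if_shortest_spanning_edge:
  assumes "finite T" "non_crossing R" "symp R" "irreflp R"
    and lm: "spanning_edge T R l m"
    and shortest: "\<And>a b. spanning_edge T R a b \<Longrightarrow> m - l \<le> b - a"
    and v_def: "v = Min {x\<in>T. l < x \<and> x < m}"
    and "w \<in> T" "R v w" "w \<noteq> l"
  shows "w = Min {x\<in>T. v < x}"
proof -
  have between: "finite {x\<in>T. l < x \<and> x < m}" "{x\<in>T. l < x \<and> x < m} \<noteq> {}"
    using lm assms(1) unfolding spanning_edge_def by auto
  have v: "v \<in> T" "l < v" "v < m"
    using Min_in[OF between] unfolding v_def by auto
  have first: "\<And>x. x \<in> T \<Longrightarrow> l < x \<Longrightarrow> x < m \<Longrightarrow> v \<le> x"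
    using Min_le[OF between(1)] unfolding v_def by blast
  have "R l m" using lm unfolding spanning_edge_def by blast
  have "\<not> w < l" using non_crossingD[OF assms(2) sympD[OF assms(3) \<open>R v w\<close>] \<open>R l m\<close>] v by auto
  moreover have "\<not> m < w" using non_crossingD[OF assms(2) \<open>R l m\<close> \<open>R v w\<close>] v by auto
  moreover have "\<not> (l < w \<and> w < v)" using first[OF \<open>w \<in> T\<close>] v by auto
  moreover have "w \<noteq> v" using irreflpD[OF assms(4)] \<open>R v w\<close> by auto
  ultimately have "v < w" "w \<le> m" using \<open>w \<noteq> l\<close> by auto
  then have "w - v < m - l" using v by linarith
  then have "\<not> spanning_edge T R v w" using shortest not_le by blast
  then have "\<forall>x\<in>T. v < x \<longrightarrow> \<not> x < w"
    using \<open>v < w\<close> \<open>w \<in> T\<close> \<open>R v w\<close> v unfolding spanning_edge_def by blast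
  then show ?thesis using Min_above_eqI assms(1) \<open>w \<in> T\<close> \<open>v < w\<close> by metis
qed

lemma non_crossing_low_degree:
  assumes "finite T" "T \<noteq> {}" "non_crossing R" "symp R" "irreflp R"
  shows "\<exists>v\<in>T. card {w\<in>T. R v w} \<le> 2"
proof -
  obtain v p where "v \<in> T" and next_after_v: "\<And>w. w \<in> T \<Longrightarrow> R v w \<Longrightarrow> w \<noteq> p \<Longrightarrow> w = Min {x\<in>T. v < x}"
  proof (cases "\<exists>a b. spanning_edge T R a b")
    case False
    then show ?thesis
      using that[of "Min T"] assms(1,2,5) neighbour_of_Min_eq_next_if_no_spanning_edge by auto
  next
    case True
    then obtain e where "spanning_edge T R (fst e) (snd e)" by auto
    then obtain l m where lm: "spanning_edge T R l m"
      and shortest: "\<And>a b. spanning_edge T R a b \<Longrightarrow> m - l \<le> b - a"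
      using ex_has_least_nat[of "\<lambda>e. spanning_edge T R (fst e) (snd e)" e "\<lambda>e. snd e - fst e"]
      by (metis fst_conv snd_conv)
    define v where "v = Min {x\<in>T. l < x \<and> x < m}"
    have "v \<in> T"
      using lm assms(1) Min_in[of "{x\<in>T. l < x \<and> x < m}"] unfolding v_def spanning_edge_def by auto
    then show ?thesis
      using that[of v l] neighbour_eq_next_if_shortest_spanning_edge[OF assms(1,3-5) lm shortest v_def]
      by blast
  qed
  have "{w\<in>T. R v w} \<subseteq> {p, Min {x\<in>T. v < x}}" using next_after_v by blast
  then have "card {w\<in>T. R v w} \<le> card {p, Min {x\<in>T. v < x}}" by (simp add: card_mono)
  also have "\<dots> \<le> 2" by (simp add: card_insert_if)
  finally show ?thesis using \<open>v \<in> T\<close> by blast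
qed

lemma non_crossing_colorable_3:
  assumes "simple_graph S R" "non_crossing R"
  shows "colorable S R 3"
proof (rule colorable_if_degenerate[OF assms(1)])
  fix T assume "T \<subseteq> S" "T \<noteq> {}"
  moreover have "finite S" "symp R" "irreflp R"
    using assms(1) unfolding simple_graph_def symp_def irreflp_def by blast+
  moreover have "finite T" using \<open>T \<subseteq> S\<close> \<open>finite S\<close> finite_subset by blast
  ultimately obtain v where "v \<in> T" "card {w\<in>T. R v w} \<le> 2"
    using non_crossing_low_degree[OF _ _ assms(2)] by blast
  then show "\<exists>v\<in>T. card {w\<in>T. R v w} < 3" by force
qed

lemma colorable_pullback:
  assumes "colorable S R k" "V \<subseteq> f ` S"
    and "\<And>i j. i \<in> S \<Longrightarrow> j \<in> S \<Longrightarrow> E (f i) (f j) \<Longrightarrow> R i j"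
    and "\<And>x y. E x y \<Longrightarrow> x \<in> V \<and> y \<in> V"
  shows "colorable V E k"
proof -
  obtain c where c_range: "\<forall>i\<in>S. c i < k" and c_proper: "\<forall>i j. R i j \<longrightarrow> c i \<noteq> c j"
    using assms(1) unfolding colorable_def by blast
  define g where "g = inv_into S f"
  have g: "g x \<in> S" "f (g x) = x" if "x \<in> V" for x
    using that assms(2) unfolding g_def by (auto simp: inv_into_into f_inv_into_f)
  have "\<forall>x\<in>V. c (g x) < k" using c_range g by blast
  moreover have "c (g x) \<noteq> c (g y)" if "E x y" for x y
  proof -
    have "x \<in> V" "y \<in> V" using assms(4) that by auto
    then have "R (g x) (g y)" using assms(3) g that by metis
    then show ?thesis using c_proper by blast
  qed
  ultimately show ?thesis unfolding colorable_def by (intro exI[of _ "c \<circ> g"]) simp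
qed

theorem lemma2:
  fixes V :: "'a set" and E :: "'a \<Rightarrow> 'a \<Rightarrow> bool" and L :: "'a list"
  assumes "simple_graph V E"
    and "enumeration V L"
    and "no_secant_edges E L"
  shows "colorable V E 3"
proof -
  define R where "R i j \<longleftrightarrow> i < length L \<and> j < length L \<and> E (L!i) (L!j)" for i j
  have "simple_graph {0..<length L} R"
    using assms(1) unfolding simple_graph_def R_def by auto
  moreover have "non_crossing R"
    unfolding non_crossing_def
  proof clarify
    fix a b c d assume "R a b" "R c d" "a < c" "c < b" "b < d"
    then have "secant E L a b c d" unfolding secant_def jump_def R_def by auto
    then show False using assms(3) unfolding no_secant_edges_def by blast
  qed
  ultimately have "colorable {0..<length L} R 3" by (rule non_crossing_colorable_3)
  moreover have "V = (!) L ` {0..<length L}"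
    using assms(2) nth_image[of "length L" L] unfolding enumeration_def by simp
  moreover have "\<And>x y. E x y \<Longrightarrow> x \<in> V \<and> y \<in> V"
    using assms(1) unfolding simple_graph_def by blast
  ultimately show ?thesis
    using colorable_pullback[of "{0..<length L}" R 3 V "(!) L" E] by (auto simp: R_def)
qed

end
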